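(* For every integer $n\ge r+1$, $c_n(\alpha,\alpha^2,0)=0$ (i.e. the polynomial $c_n(\alpha,\beta,0)$ vanishes when $\beta=\alpha^2$).
   Context: Fix an integer $r\ge1$ and indeterminates $\alpha,\beta,\gamma$. Define polynomials $c_n=c_n(\alpha,\beta,\gamma)\in\mathbb{Q}[\alpha,\beta,\gamma]$ by $c_n=0$ for $n<0$, $c_0=1$, and for every integer $n\ge-3$, $$(n+4)c_{n+4}+(2n+6-r)\alpha c_{n+3}+\left[(n+2-r)\alpha^2+(2n+5-2r)\frac{\alpha^2-\beta}{4}\right]c_{n+2}+\left[(2n+3-3r)\alpha\frac{\alpha^2-\beta}{4}+\frac{\gamma}{2}\right]c_{n+1}+\frac{1}{16}(\alpha^2-\beta)^2(n+1-2r)c_n=0.$$ *)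

theory Defs
  imports Complex_Main
begin

text \<open>The polynomials c_n(alpha,beta,gamma) evaluated at elements a, b, g of an
arbitrary field of characteristic 0.  Index k of cseq is c_k (k >= 0); c_k = 0 for
k < 0 is handled by the guards.  The defining equation for c_{Suc m} is the
recurrence with n = Suc m - 4 (n >= -3), solved for c_{n+4}.\<close>

fun cseq :: "nat \<Rightarrow> 'a::field_char_0 \<Rightarrow> 'a \<Rightarrow> 'a \<Rightarrow> nat \<Rightarrow> 'a" where
  "cseq r a b g 0 = 1"
| "cseq r a b g (Suc m) =
     (let n = int (Suc m) - 4;
          R = int r;
          c3 = cseq r a b g m;
          c2 = (if m \<ge> 1 then cseq r a b g (m - 1) else 0);
          c1 = (if m \<ge> 2 then cseq r a b g (m - 2) else 0);
          c0 = (if m \<ge> 3 then cseq r a b g (m - 3) else 0)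
      in - ( of_int (2*n + 6 - R) * a * c3
           + (of_int (n + 2 - R) * a^2 + of_int (2*n + 5 - 2*R) * ((a^2 - b) / 4)) * c2
           + (of_int (2*n + 3 - 3*R) * a * ((a^2 - b) / 4) + g / 2) * c1
           + (1/16) * (a^2 - b)^2 * of_int (n + 1 - 2*R) * c0 )
         / of_nat (Suc m))"

end

theory Submission
  imports Defs
begin

text \<open>For \<open>\<beta> = \<alpha>\<^sup>2\<close> and \<open>\<gamma> = 0\<close> the factor \<open>\<alpha>\<^sup>2 - \<beta>\<close> kills the last two terms of
the recurrence, leaving a three-term recurrence.  It is also satisfied by the coefficients
\<open>(r choose n) \<alpha>\<^sup>n\<close> of the polynomial \<open>(1 + \<alpha> x)\<^sup>r\<close>, which agree with \<open>c\<^sub>0\<close> and \<open>c\<^sub>1\<close>;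
hence \<open>c\<^sub>n = (r choose n) \<alpha>\<^sup>n\<close>, which vanishes for \<open>n > r\<close>.\<close>

lemma of_nat_Suc_times_binomial_Suc:
  "(of_nat (Suc k) :: 'a::comm_ring_1) * of_nat (r choose Suc k)
     = (of_nat r - of_nat k) * of_nat (r choose k)"
proof (cases "k \<le> r")
  case True
  have "Suc k * (r choose Suc k) = (r - k) * (r choose k)"
    by (metis binomial_absorb_comp binomial_absorption)
  then have "(of_nat (Suc k * (r choose Suc k)) :: 'a) = of_nat ((r - k) * (r choose k))"
    by (simp only:)
  then show ?thesis
    using True by (simp add: of_nat_diff algebra_simps)
next
  case False
  then show ?thesis by (simp add: binomial_eq_0)
qed

lemma of_nat_binomial_three_term:
  "(of_nat (Suc (Suc k)) :: 'a::comm_ring_1) * of_nat (r choose Suc (Suc k))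
     = (of_nat r - 2 * of_nat k - 2) * of_nat (r choose Suc k)
       + (of_nat r - of_nat k) * of_nat (r choose k)"
proof -
  have "(of_nat r - 2 * of_nat k - 2) * of_nat (r choose Suc k)
          + (of_nat r - of_nat k) * of_nat (r choose k)
        = (of_nat r - 2 * of_nat k - 2) * of_nat (r choose Suc k)
          + (of_nat (Suc k) :: 'a) * of_nat (r choose Suc k)"
    by (simp only: of_nat_Suc_times_binomial_Suc)
  also have "\<dots> = (of_nat r - of_nat (Suc k)) * of_nat (r choose Suc k)"
    by (simp add: algebra_simps)
  also have "\<dots> = of_nat (Suc (Suc k)) * of_nat (r choose Suc (Suc k))"
    by (simp only: of_nat_Suc_times_binomial_Suc)
  finally show ?thesis ..
qed

lemma cseq_square_zero_1: "cseq r a (a\<^sup>2) 0 1 = of_nat r * a"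
  by (simp add: Let_def)

lemma cseq_square_zero_Suc_Suc:
  fixes a :: "'a::field_char_0"
  shows "of_nat (Suc (Suc k)) * cseq r a (a\<^sup>2) 0 (Suc (Suc k))
           = (of_nat r - 2 * of_nat k - 2) * a * cseq r a (a\<^sup>2) 0 (Suc k)
             + (of_nat r - of_nat k) * a\<^sup>2 * cseq r a (a\<^sup>2) 0 k"
proof -
  have "cseq r a (a\<^sup>2) 0 (Suc (Suc k))
          = - (of_int (2 * int k + 2 - int r) * a * cseq r a (a\<^sup>2) 0 (Suc k)
               + of_int (int k - int r) * a\<^sup>2 * cseq r a (a\<^sup>2) 0 k)
            / of_nat (Suc (Suc k))"
    by (subst cseq.simps(2)) (simp add: Let_def algebra_simps del: cseq.simps)
  then show ?thesis
    by (simp add: field_simps del: of_nat_Suc cseq.simps)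
qed

lemma cseq_square_zero:
  fixes a :: "'a::field_char_0"
  shows "cseq r a (a\<^sup>2) 0 n = of_nat (r choose n) * a ^ n"
proof (induction n rule: less_induct)
  case (less n)
  consider "n = 0" | "n = 1" | k where "n = Suc (Suc k)"
    by (metis One_nat_def not0_implies_Suc)
  then show ?case
  proof cases
    case 3
    let ?c = "cseq r a (a\<^sup>2) 0"
    have IH: "?c k = of_nat (r choose k) * a ^ k"
             "?c (Suc k) = of_nat (r choose Suc k) * a ^ Suc k"
      using less 3 by (simp_all del: cseq.simps)
    have "of_nat (Suc (Suc k)) * ?c (Suc (Suc k))
            = (of_nat r - 2 * of_nat k - 2) * a * ?c (Suc k) + (of_nat r - of_nat k) * a\<^sup>2 * ?c k"
      by (rule cseq_square_zero_Suc_Suc)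
    also have "\<dots> = ((of_nat r - 2 * of_nat k - 2) * of_nat (r choose Suc k)
                       + (of_nat r - of_nat k) * of_nat (r choose k)) * a ^ Suc (Suc k)"
      unfolding IH by (simp add: algebra_simps power2_eq_square)
    also have "\<dots> = of_nat (Suc (Suc k)) * (of_nat (r choose Suc (Suc k)) * a ^ Suc (Suc k))"
      unfolding of_nat_binomial_three_term[symmetric] by (rule mult.assoc)
    finally show ?thesis
      using 3 by (metis mult_left_cancel of_nat_neq_0)
  qed (simp_all add: cseq_square_zero_1)
qed

theorem corollary3p5:
  fixes r n :: nat and \<alpha> :: "'a::field_char_0"
  assumes "r \<ge> 1" and "n \<ge> r + 1"
  shows "cseq r \<alpha> (\<alpha>^2) 0 n = 0"
  using assms by (simp add: cseq_square_zero binomial_eq_0)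

end
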